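(* Let $n\ge 2$ be an integer, $C\ge 4$ a constant, $Z$ a finite set with $|Z|\ge 2$, and $T_1,T_2$ rooted $Z$-trees with $\mathrm{Seq}(T_1)=\mathrm{Seq}(T_2)$. Then at least one of the following holds: (1) there is a pair $(x,Y)$ with $x\in Z$, $\emptyset\neq Y\subset Z$, $\mathrm{lca}_{T_1}(Y)\prec\mathrm{lca}_{T_1}(Y\cup\{x\})$, $\mathrm{lca}_{T_2}(Y)\prec\mathrm{lca}_{T_2}(Y\cup\{x\})$ and $|Y|\ge |Z|/C$; (2) there is a good pair $(x,Y)$ (with respect to $n$, $T_1$, $T_2$); (3) there is a set $A\subseteq Z$ with $|A|\ge \log n$ such that the unrooted trees obtained from $T_1|A$ and $T_2|A$ by suppressing the root are identical caterpillars.
   Context: A rooted $Z$-tree is a binary rooted tree with a root of degree two, all other internal nodes of degree three, leaves bijectively labeled by $Z$, and each internal node having a designated left child and right child. $x\preceq y$ means $x$ is a descendant of $y$ ($x\prec y$ if also $x\ne y$); $\mathrm{lca}_T(W)$ is the lowest node having all elements of $W$ as descendants. For $A\subseteq Z$, $T|A$ is the rooted tree obtained from the minimal subtree spanning $A$, rooted at $\mathrm{lca}_T(A)$, by suppressing non-root degree-two nodes. $\mathrm{Seq}(T)$ is the left-to-right leaf ordering given by pre-order traversal (left child before right child). A good pair (with respect to $n$, $T_1$, $T_2$) is a pair $(x,Y)$ with $x\in Z$, $\emptyset\ne Y\subset Z$, $\mathrm{lca}_{T_1}(Y)\prec\mathrm{lca}_{T_1}(Y\cup\{x\})$, $\mathrm{lca}_{T_2}(Y)\prec\mathrm{lca}_{T_2}(Y\cup\{x\})$,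 and $|Y|\ge|Z|/(2\log n)$. A tree is a caterpillar if every internal node is adjacent to at least one leaf; unrooted trees are identical if there is a label-preserving graph isomorphism. $\log=\log_2$. *)

theory Defs
  imports Complex_Main "HOL-Library.Sublist"
begin

datatype 'a btree = Leaf 'a | Node "'a btree" "'a btree"

fun Seq :: "'a btree \<Rightarrow> 'a list" where
  "Seq (Leaf a) = [a]"
| "Seq (Node l r) = Seq l @ Seq r"

text \<open>A rooted Z-tree: root of degree two (a Node), leaves bijectively labelled by Z.\<close>
definition rooted_Ztree :: "'a set \<Rightarrow> 'a btree \<Rightarrow> bool" where
  "rooted_Ztree Z t \<longleftrightarrow> (\<exists>l r. t = Node l r) \<and> distinct (Seq t) \<and> set (Seq t) = Z"

text \<open>Nodes of a tree are identified with their positions (paths from the root;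
  False = go to left child, True = go to right child).\<close>
fun positions :: "'a btree \<Rightarrow> bool list set" where
  "positions (Leaf a) = {[]}"
| "positions (Node l r) = {[]} \<union> (Cons False) ` positions l \<union> (Cons True) ` positions r"

fun subtree_at :: "'a btree \<Rightarrow> bool list \<Rightarrow> 'a btree" where
  "subtree_at t [] = t"
| "subtree_at (Node l r) (False # p) = subtree_at l p"
| "subtree_at (Node l r) (True # p) = subtree_at r p"
| "subtree_at (Leaf a) (b # p) = Leaf a"

definition leafpos :: "'a btree \<Rightarrow> 'a \<Rightarrow> bool list" where
  "leafpos t x = (THE p. p \<in> positions t \<and> subtree_at t p = Leaf x)"

text \<open>desc t p q: node p is a descendant of node q (p \<preceq> q); sdesc: strict (p \<prec> q).\<close>
definition desc :: "'a btree \<Rightarrow> bool list \<Rightarrow> bool list \<Rightarrow> bool" where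
  "desc t p q \<longleftrightarrow> p \<in> positions t \<and> q \<in> positions t \<and> prefix q p"

definition sdesc :: "'a btree \<Rightarrow> bool list \<Rightarrow> bool list \<Rightarrow> bool" where
  "sdesc t p q \<longleftrightarrow> desc t p q \<and> p \<noteq> q"

definition lca :: "'a btree \<Rightarrow> 'a set \<Rightarrow> bool list" where
  "lca t W = (THE v. v \<in> positions t \<and> (\<forall>w\<in>W. desc t (leafpos t w) v)
      \<and> (\<forall>u. (\<forall>w\<in>W. desc t (leafpos t w) u) \<longrightarrow> desc t v u))"

text \<open>Restriction T|A: minimal subtree spanning A, rooted at lca(A), with non-root
  degree-two nodes suppressed (None iff no leaf of A occurs).\<close>
fun restrict :: "'a set \<Rightarrow> 'a btree \<Rightarrow> 'a btree option" where
  "restrict A (Leaf a) = (if a \<in> A then Some (Leaf a) else None)"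
| "restrict A (Node l r) =
     (case (restrict A l, restrict A r) of
        (None, None) \<Rightarrow> None
      | (Some l', None) \<Rightarrow> Some l'
      | (None, Some r') \<Rightarrow> Some r'
      | (Some l', Some r') \<Rightarrow> Some (Node l' r'))"

definition restr :: "'a btree \<Rightarrow> 'a set \<Rightarrow> 'a btree" where
  "restr t A = the (restrict A t)"

text \<open>The unrooted tree obtained from a rooted binary tree by suppressing the root
  (degree two): vertices are the non-root nodes, edges are the parent-child edges
  not incident to the root, plus an edge joining the two children of the root.\<close>
definition uverts :: "'a btree \<Rightarrow> bool list set" where
  "uverts t = (case t of Leaf a \<Rightarrow> {[]} | Node l r \<Rightarrow> positions t - {[]})"

definition uedges :: "'a btree \<Rightarrow> bool list set set" where
  "uedges t = (case t of Leaf a \<Rightarrow> {} | Node l r \<Rightarrow>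
      {{p, p @ [b]} | p b. p \<noteq> [] \<and> p @ [b] \<in> positions t} \<union> {{[False], [True]}})"

definition ulabel :: "'a btree \<Rightarrow> bool list \<Rightarrow> 'a option" where
  "ulabel t p = (case subtree_at t p of Leaf a \<Rightarrow> Some a | Node l r \<Rightarrow> None)"

definition ucaterpillar :: "'a btree \<Rightarrow> bool" where
  "ucaterpillar t \<longleftrightarrow> (\<forall>v\<in>uverts t. ulabel t v = None \<longrightarrow>
      (\<exists>w\<in>uverts t. {v, w} \<in> uedges t \<and> ulabel t w \<noteq> None))"

definition uidentical :: "'a btree \<Rightarrow> 'a btree \<Rightarrow> bool" where
  "uidentical t1 t2 \<longleftrightarrow> (\<exists>f. bij_betw f (uverts t1) (uverts t2)
      \<and> (\<forall>p\<in>uverts t1. \<forall>q\<in>uverts t1. {p, q} \<in> uedges t1 \<longleftrightarrow> {f p, f q} \<in> uedges t2)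
      \<and> (\<forall>p\<in>uverts t1. ulabel t2 (f p) = ulabel t1 p))"

definition good_pair :: "nat \<Rightarrow> 'a set \<Rightarrow> 'a btree \<Rightarrow> 'a btree \<Rightarrow> 'a \<Rightarrow> 'a set \<Rightarrow> bool" where
  "good_pair n Z T1 T2 x Y \<longleftrightarrow> x \<in> Z \<and> Y \<noteq> {} \<and> Y \<subset> Z
      \<and> sdesc T1 (lca T1 Y) (lca T1 (Y \<union> {x}))
      \<and> sdesc T2 (lca T2 Y) (lca T2 (Y \<union> {x}))
      \<and> real (card Y) \<ge> real (card Z) / (2 * log 2 (real n))"

end

theory Submission
  imports Defs
begin

text \<open>Write \<open>T\<^sub>1 = (l\<^sub>1, r\<^sub>1)\<close>, \<open>T\<^sub>2 = (l\<^sub>2, r\<^sub>2)\<close> and assume by symmetry that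
  \<open>Seq l\<^sub>1\<close> is a prefix of \<open>Seq l\<^sub>2\<close>. Call \<open>(x, Y)\<close> an escape pair if \<open>x\<close> lies outside
  the lca of \<open>Y\<close> in both trees; every clade of one tree contained in a child of the root of the
  other yields one. If there is no good pair, all escape pairs have \<open>|Y| \<le> K < |Z| / (2 log n)\<close>.
  Then \<open>l\<^sub>1\<close> and \<open>r\<^sub>2\<close> have at most \<open>K\<close> leaves, and taking every \<open>K\<close>-th leaf of the
  middle segment \<open>r\<^sub>1 \<inter> l\<^sub>2\<close> of the common leaf sequence gives a set \<open>A\<close> with
  \<open>|A| > 2 log n - 2\<close>. A clade that does not straddle the boundary between \<open>l\<^sub>2\<close> and \<open>r\<^sub>2\<close>
  (resp. \<open>l\<^sub>1\<close> and \<open>r\<^sub>1\<close>) has at most \<open>K\<close> leaves, so it contains at most one point of \<open>A\<close>.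
  Hence \<open>T\<^sub>1|A\<close> is a right comb and \<open>T\<^sub>2|A\<close> a left comb with the same leaf sequence, and
  after suppressing the root these are the same caterpillar. If \<open>log n < 2\<close>, the first two
  leaves already suffice.\<close>

section \<open>Positions and leaves\<close>

abbreviation leaves :: "'a btree \<Rightarrow> 'a set" where
  "leaves t \<equiv> set (Seq t)"

lemma Seq_neq_Nil: "Seq t \<noteq> []"
  by (induction t) auto

lemma Nil_in_positions [simp]: "[] \<in> positions t"
  by (cases t) auto

lemma Cons_in_image_Cons [simp]: "b # p \<in> (#) c ` S \<longleftrightarrow> b = c \<and> p \<in> S"
  by auto

lemma positions_append_iff:
  "p \<in> positions t \<Longrightarrow> p @ q \<in> positions t \<longleftrightarrow> q \<in> positions (subtree_at t p)"
proof (induction t arbitrary: p)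
  case (Node l r)
  then show ?case by (cases p) (auto split: bool.splits)
qed simp

lemma subtree_at_append:
  "p \<in> positions t \<Longrightarrow> subtree_at t (p @ q) = subtree_at (subtree_at t p) q"
proof (induction t arbitrary: p)
  case (Node l r)
  then show ?case by (cases p) auto
qed simp

lemma positions_prefix_closed: "prefix p q \<Longrightarrow> q \<in> positions t \<Longrightarrow> p \<in> positions t"
proof (induction t arbitrary: p q)
  case (Node l r)
  then show ?case by (cases p; cases q) auto
qed (auto simp: prefix_def)

lemma leaves_subtree_at: "p \<in> positions t \<Longrightarrow> leaves (subtree_at t p) \<subseteq> leaves t"
proof (induction t arbitrary: p)
  case (Node l r)
  show ?case
  proof (cases p)
    case (Cons b q)
    then show ?thesis using Node by (cases b) auto
  qed simp
qed simp

lemma ex_leaf_position: "x \<in> leaves t \<Longrightarrow> \<exists>p\<in>positions t. subtree_at t p = Leaf x"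
proof (induction t)
  case (Node l r)
  then consider "x \<in> leaves l" | "x \<in> leaves r" by auto
  then show ?case
  proof cases
    case 1
    with Node.IH(1) obtain p where "p \<in> positions l" "subtree_at l p = Leaf x" by blast
    then show ?thesis by (intro bexI[of _ "False # p"]) auto
  next
    case 2
    with Node.IH(2) obtain p where "p \<in> positions r" "subtree_at r p = Leaf x" by blast
    then show ?thesis by (intro bexI[of _ "True # p"]) auto
  qed
qed simp

lemma Leaf_subtree_at_in_leaves:
  "p \<in> positions t \<Longrightarrow> subtree_at t p = Leaf x \<Longrightarrow> x \<in> leaves t"
  using leaves_subtree_at by fastforce

lemma leaf_position_unique:
  "\<lbrakk>distinct (Seq t); p \<in> positions t; subtree_at t p = Leaf x;
    p' \<in> positions t; subtree_at t p' = Leaf x\<rbrakk> \<Longrightarrow> p = p'"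
proof (induction t arbitrary: p p')
  case (Node l r)
  obtain b q where p: "p = b # q" using Node.prems(3) by (cases p) auto
  obtain b' q' where p': "p' = b' # q'" using Node.prems(5) by (cases p') auto
  have disj: "leaves l \<inter> leaves r = {}" and dist: "distinct (Seq l)" "distinct (Seq r)"
    using Node.prems(1) by auto
  show ?case
  proof (cases b; cases b')
    assume "b" "b'"
    then show ?thesis using Node.IH(2)[OF dist(2)] Node.prems p p' by simp
  next
    assume "\<not> b" "\<not> b'"
    then show ?thesis using Node.IH(1)[OF dist(1)] Node.prems p p' by simp
  next
    assume "b" "\<not> b'"
    then show ?thesis using Node.prems p p' disj Leaf_subtree_at_in_leaves[of q r x]
        Leaf_subtree_at_in_leaves[of q' l x] by auto
  next
    assume "\<not> b" "b'"
    then show ?thesis using Node.prems p p' disj Leaf_subtree_at_in_leaves[of q l x]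
        Leaf_subtree_at_in_leaves[of q' r x] by auto
  qed
qed simp

lemma leafpos:
  assumes "distinct (Seq t)" "x \<in> leaves t"
  shows "leafpos t x \<in> positions t" "subtree_at t (leafpos t x) = Leaf x"
proof -
  have "\<exists>!p. p \<in> positions t \<and> subtree_at t p = Leaf x"
    using ex_leaf_position[OF assms(2)] leaf_position_unique[OF assms(1)] by blast
  then have "leafpos t x \<in> positions t \<and> subtree_at t (leafpos t x) = Leaf x"
    unfolding leafpos_def by (rule theI')
  then show "leafpos t x \<in> positions t" "subtree_at t (leafpos t x) = Leaf x" by auto
qed

lemma leafpos_eq:
  "\<lbrakk>distinct (Seq t); p \<in> positions t; subtree_at t p = Leaf x\<rbrakk> \<Longrightarrow> leafpos t x = p"
  using leafpos leaf_position_unique Leaf_subtree_at_in_leaves by metis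

lemma in_leaves_subtree_at_iff_prefix_leafpos:
  assumes "distinct (Seq t)" "q \<in> positions t" "x \<in> leaves t"
  shows "x \<in> leaves (subtree_at t q) \<longleftrightarrow> prefix q (leafpos t x)"
proof
  assume "x \<in> leaves (subtree_at t q)"
  from ex_leaf_position[OF this] obtain r
    where "r \<in> positions (subtree_at t q)" "subtree_at (subtree_at t q) r = Leaf x" ..
  then have "leafpos t x = q @ r"
    using leafpos_eq[OF assms(1)] positions_append_iff[OF assms(2)] subtree_at_append[OF assms(2)]
    by metis
  then show "prefix q (leafpos t x)" by simp
next
  assume "prefix q (leafpos t x)"
  then obtain r where r: "leafpos t x = q @ r" by (auto simp: prefix_def)
  then have "r \<in> positions (subtree_at t q)" "subtree_at (subtree_at t q) r = Leaf x"
    using leafpos[OF assms(1,3)] positions_append_iff[OF assms(2)] subtree_at_append[OF assms(2)]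
    by metis+
  then show "x \<in> leaves (subtree_at t q)" by (rule Leaf_subtree_at_in_leaves)
qed

section \<open>Lowest common ancestors and escape pairs\<close>

lemma lca_eq_Longest_common_prefix:
  assumes t: "distinct (Seq t)" and Y: "Y \<noteq> {}" "Y \<subseteq> leaves t"
  shows "lca t Y = Longest_common_prefix (leafpos t ` Y)"
proof -
  let ?c = "Longest_common_prefix (leafpos t ` Y)"
  let ?common = "\<lambda>u. \<forall>w\<in>Y. desc t (leafpos t w) u"
  have leafpos_Y: "leafpos t y \<in> positions t" if "y \<in> Y" for y
    using leafpos(1)[OF t] that Y(2) by blast
  have common_iff: "?common u \<longleftrightarrow> u \<in> positions t \<and> (\<forall>y\<in>Y. prefix u (leafpos t y))" for u
    using Y(1) leafpos_Y unfolding desc_def by blast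
  have c_common: "?common ?c"
    unfolding common_iff
    using Y(1) leafpos_Y Longest_common_prefix_prefix positions_prefix_closed by blast
  have c_lowest: "desc t ?c u" if "?common u" for u
    using that c_common Longest_common_prefix_max_prefix[of "leafpos t ` Y"] Y(1)
    unfolding common_iff desc_def by blast
  have "lca t Y = ?c"
    unfolding lca_def
  proof (rule the_equality)
    fix v assume "v \<in> positions t \<and> ?common v \<and> (\<forall>u. ?common u \<longrightarrow> desc t v u)"
    then show "v = ?c"
      using c_common c_lowest unfolding desc_def by (blast intro: prefix_order.antisym)
  qed (use c_common c_lowest common_iff in blast)
  then show ?thesis .
qed

lemma lca_in_positions:
  assumes "distinct (Seq t)" "Y \<noteq> {}" "Y \<subseteq> leaves t"
  shows "lca t Y \<in> positions t"
proof -
  obtain y where "y \<in> Y" using assms(2) by blast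
  then have "prefix (lca t Y) (leafpos t y)" "leafpos t y \<in> positions t"
    using lca_eq_Longest_common_prefix[OF assms] Longest_common_prefix_prefix[OF imageI]
      leafpos(1)[OF assms(1)] assms(3) by auto
  then show ?thesis by (rule positions_prefix_closed)
qed

lemma sdesc_lca_insert:
  assumes t: "distinct (Seq t)" and q: "q \<in> positions t"
    and Y: "Y \<noteq> {}" "Y \<subseteq> leaves (subtree_at t q)"
    and x: "x \<in> leaves t" "x \<notin> leaves (subtree_at t q)"
  shows "sdesc t (lca t Y) (lca t (Y \<union> {x}))"
proof -
  have Yt: "Y \<subseteq> leaves t" using Y(2) leaves_subtree_at[OF q] by blast
  have Yxt: "Y \<union> {x} \<noteq> {}" "Y \<union> {x} \<subseteq> leaves t" using Yt x(1) by auto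
  note lcaY = lca_eq_Longest_common_prefix[OF t Y(1) Yt]
  note lcaYx = lca_eq_Longest_common_prefix[OF t Yxt]
  have "prefix (lca t (Y \<union> {x})) (lca t Y)"
    unfolding lcaY lcaYx using Y(1)
    by (intro Longest_common_prefix_max_prefix ballI Longest_common_prefix_prefix) auto
  moreover have "lca t Y \<noteq> lca t (Y \<union> {x})"
  proof
    assume eq: "lca t Y = lca t (Y \<union> {x})"
    have "\<forall>y\<in>Y. prefix q (leafpos t y)"
      using Y(2) Yt in_leaves_subtree_at_iff_prefix_leafpos[OF t q] by blast
    then have "prefix q (lca t Y)"
      unfolding lcaY using Y(1) by (auto intro: Longest_common_prefix_max_prefix)
    also have "prefix (lca t Y) (leafpos t x)"
      unfolding eq lcaYx by (auto intro: Longest_common_prefix_prefix)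
    finally show False
      using in_leaves_subtree_at_iff_prefix_leafpos[OF t q x(1)] x(2) by simp
  qed
  ultimately show ?thesis
    unfolding sdesc_def desc_def using lca_in_positions[OF t Y(1) Yt] lca_in_positions[OF t Yxt]
    by blast
qed

definition escape_pair :: "'a set \<Rightarrow> 'a btree \<Rightarrow> 'a btree \<Rightarrow> 'a \<Rightarrow> 'a set \<Rightarrow> bool" where
  "escape_pair Z t1 t2 x Y \<longleftrightarrow> x \<in> Z \<and> Y \<noteq> {} \<and> Y \<subset> Z
      \<and> sdesc t1 (lca t1 Y) (lca t1 (Y \<union> {x})) \<and> sdesc t2 (lca t2 Y) (lca t2 (Y \<union> {x}))"

lemma escape_pair_commute: "escape_pair Z t1 t2 x Y \<longleftrightarrow> escape_pair Z t2 t1 x Y"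
  unfolding escape_pair_def by auto

lemma good_pair_iff:
  "good_pair n Z t1 t2 x Y \<longleftrightarrow>
     escape_pair Z t1 t2 x Y \<and> real (card Z) / (2 * log 2 (real n)) \<le> real (card Y)"
  unfolding good_pair_def escape_pair_def by auto

lemma escape_pair_clade:
  assumes t1: "rooted_Ztree Z t1" and t2: "rooted_Ztree Z t2"
    and q1: "q1 \<in> positions t1" and q2: "q2 \<in> positions t2"
    and sub: "leaves (subtree_at t1 q1) \<subseteq> leaves (subtree_at t2 q2)"
    and x: "x \<in> Z" "x \<notin> leaves (subtree_at t2 q2)"
  shows "escape_pair Z t1 t2 x (leaves (subtree_at t1 q1))"
proof -
  let ?Y = "leaves (subtree_at t1 q1)"
  have dist: "distinct (Seq t1)" "distinct (Seq t2)" and Z: "leaves t1 = Z" "leaves t2 = Z"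
    using t1 t2 unfolding rooted_Ztree_def by auto
  have Y: "?Y \<noteq> {}" "x \<notin> ?Y" "?Y \<subseteq> Z"
    using Seq_neq_Nil sub x(2) leaves_subtree_at[OF q1] Z(1) by auto
  show ?thesis
    unfolding escape_pair_def
    using Y x sdesc_lca_insert[OF dist(1) q1 Y(1) order.refl] sdesc_lca_insert[OF dist(2) q2 Y(1) sub]
      Z by auto
qed

lemma ex_escape_pair_clade_in_child:
  assumes t1: "rooted_Ztree Z t1" and t2: "rooted_Ztree Z (Node l r)"
    and q1: "q1 \<in> positions t1"
    and sub: "leaves (subtree_at t1 q1) \<subseteq> leaves l \<or> leaves (subtree_at t1 q1) \<subseteq> leaves r"
  shows "\<exists>x. escape_pair Z t1 (Node l r) x (leaves (subtree_at t1 q1))"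
proof -
  have disj: "leaves l \<inter> leaves r = {}" and Z: "Z = leaves l \<union> leaves r"
    using t2 unfolding rooted_Ztree_def by auto
  obtain x y where "x \<in> leaves l" "y \<in> leaves r"
    using Seq_neq_Nil by (metis last_in_set)
  with sub consider "leaves (subtree_at t1 q1) \<subseteq> leaves (subtree_at (Node l r) [False])"
      "y \<in> Z" "y \<notin> leaves (subtree_at (Node l r) [False])"
    | "leaves (subtree_at t1 q1) \<subseteq> leaves (subtree_at (Node l r) [True])"
      "x \<in> Z" "x \<notin> leaves (subtree_at (Node l r) [True])"
    using disj Z by auto
  then show ?thesis
  proof cases
    case 1
    then show ?thesis using escape_pair_clade[OF t1 t2 q1, of "[False]" y] by auto
  next
    case 2
    then show ?thesis using escape_pair_clade[OF t1 t2 q1, of "[True]" x] by auto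
  qed
qed

section \<open>Restrictions that are combs\<close>

lemma restrict_eq_None_iff: "restrict A t = None \<longleftrightarrow> A \<inter> leaves t = {}"
  by (induction t) (auto split: option.splits)

lemma Seq_restrict: "restrict A t = Some t' \<Longrightarrow> Seq t' = filter (\<lambda>x. x \<in> A) (Seq t)"
proof (induction t arbitrary: t')
  case (Node l r)
  then show ?case
    by (auto split: option.splits simp: restrict_eq_None_iff filter_empty_conv)
qed (auto split: if_splits)

lemma Seq_eq_singleton: "Seq t = [x] \<Longrightarrow> t = Leaf x"
  by (cases t) (auto simp: append_eq_Cons_conv Seq_neq_Nil)

lemma Seq_eq_doubleton: "Seq t = [x, y] \<Longrightarrow> t = Node (Leaf x) (Leaf y)"
  by (cases t) (auto simp: append_eq_Cons_conv Seq_neq_Nil Seq_eq_singleton)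

lemma distinct_set_eq_singleton: "set xs = {z} \<Longrightarrow> distinct xs \<Longrightarrow> xs = [z]"
  by (cases xs) (auto simp: insert_eq_iff subset_singleton_iff)

lemma restrict_singleton:
  assumes "distinct (Seq t)" "A \<inter> leaves t = {z}"
  shows "restrict A t = Some (Leaf z)" "filter (\<lambda>x. x \<in> A) (Seq t) = [z]"
proof -
  have "set (filter (\<lambda>x. x \<in> A) (Seq t)) = {z}" "distinct (filter (\<lambda>x. x \<in> A) (Seq t))"
    using assms by auto
  then show filter: "filter (\<lambda>x. x \<in> A) (Seq t) = [z]"
    by (rule distinct_set_eq_singleton)
  obtain t' where t': "restrict A t = Some t'"
    using assms(2) restrict_eq_None_iff[of A t] by fastforce
  then show "restrict A t = Some (Leaf z)"
    using Seq_restrict[OF t'] filter Seq_eq_singleton by auto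
qed

fun subtrees :: "'a btree \<Rightarrow> 'a btree set" where
  "subtrees (Leaf a) = {Leaf a}"
| "subtrees (Node l r) = insert (Node l r) (subtrees l \<union> subtrees r)"

lemma self_in_subtrees [simp]: "t \<in> subtrees t"
  by (cases t) auto

lemma subtrees_eq_subtree_at_positions: "subtrees t = subtree_at t ` positions t"
  by (induction t) (auto simp: image_image image_Un)

lemma sublist_Seq_subtrees: "v \<in> subtrees t \<Longrightarrow> sublist (Seq v) (Seq t)"
  by (induction t)
    (auto intro: sublist_order.order.trans[OF _ sublist_append_rightI]
      sublist_order.order.trans[OF _ sublist_append_leftI])

fun mirror :: "'a btree \<Rightarrow> 'a btree" where
  "mirror (Leaf a) = Leaf a"
| "mirror (Node l r) = Node (mirror r) (mirror l)"

lemma mirror_mirror [simp]: "mirror (mirror t) = t"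
  by (induction t) auto

lemma Seq_mirror [simp]: "Seq (mirror t) = rev (Seq t)"
  by (induction t) auto

lemma subtrees_mirror: "subtrees (mirror t) = mirror ` subtrees t"
  by (induction t) auto

lemma restrict_mirror: "restrict A (mirror t) = map_option mirror (restrict A t)"
  by (induction t) (auto split: option.splits)

fun right_comb :: "'a list \<Rightarrow> 'a btree" where
  "right_comb [] = Leaf undefined"
| "right_comb [x] = Leaf x"
| "right_comb (x # y # ys) = Node (Leaf x) (right_comb (y # ys))"

definition left_comb :: "'a list \<Rightarrow> 'a btree" where
  "left_comb xs = mirror (right_comb (rev xs))"

lemma right_comb_Cons: "ys \<noteq> [] \<Longrightarrow> right_comb (x # ys) = Node (Leaf x) (right_comb ys)"
  by (cases ys) auto

lemma left_comb_snoc: "xs \<noteq> [] \<Longrightarrow> left_comb (xs @ [x]) = Node (left_comb xs) (Leaf x)"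
  by (simp add: left_comb_def right_comb_Cons)

text \<open>The hypothesis \<open>sorted_wrt (\<lambda>x y. P y \<longrightarrow> P x)\<close> says that the leaves satisfying \<open>P\<close>
  form an initial segment of the leaf sequence.\<close>

lemma restrict_right_comb:
  assumes "distinct (Seq u)" and "sorted_wrt (\<lambda>x y. P y \<longrightarrow> P x) (Seq u)"
    and "\<forall>v\<in>subtrees u. (\<forall>x\<in>leaves v. P x) \<longrightarrow> card (A \<inter> leaves v) \<le> 1"
    and "\<forall>x\<in>A. P x" and "A \<inter> leaves u \<noteq> {}"
  shows "restrict A u = Some (right_comb (filter (\<lambda>x. x \<in> A) (Seq u)))"
  using assms
proof (induction u)
  case (Node l r)
  have IH: "A \<inter> leaves l \<noteq> {} \<Longrightarrow> restrict A l = Some (right_comb (filter (\<lambda>x. x \<in> A) (Seq l)))"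
    "A \<inter> leaves r \<noteq> {} \<Longrightarrow> restrict A r = Some (right_comb (filter (\<lambda>x. x \<in> A) (Seq r)))"
    using Node by (auto simp: sorted_wrt_append)
  show ?case
  proof (cases "A \<inter> leaves r = {}")
    case True
    then have "restrict A r = None" "filter (\<lambda>x. x \<in> A) (Seq r) = []"
      by (auto simp: restrict_eq_None_iff filter_empty_conv)
    moreover have "A \<inter> leaves l \<noteq> {}" using Node.prems(5) True by auto
    ultimately show ?thesis using IH(1) by simp
  next
    case False
    then obtain y where "y \<in> leaves r" "P y" using Node.prems(4) by blast
    then have "\<forall>x\<in>leaves l. P x" using Node.prems(2) by (auto simp: sorted_wrt_append)
    moreover have "l \<in> subtrees (Node l r)" by simp
    ultimately have "card (A \<inter> leaves l) \<le> 1" using Node.prems(3) by blast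
    then have "card (A \<inter> leaves l) = 0 \<or> card (A \<inter> leaves l) = 1" by linarith
    then consider "A \<inter> leaves l = {}" | z where "A \<inter> leaves l = {z}"
      by (auto simp: card_1_singleton_iff)
    then show ?thesis
    proof cases
      case 1
      then have "restrict A l = None" "filter (\<lambda>x. x \<in> A) (Seq l) = []"
        by (auto simp: restrict_eq_None_iff filter_empty_conv)
      then show ?thesis using IH(2) False by auto
    next
      case 2
      have "distinct (Seq l)" using Node.prems(1) by simp
      moreover have "filter (\<lambda>x. x \<in> A) (Seq r) \<noteq> []" using False by (auto simp: filter_empty_conv)
      ultimately show ?thesis
        using IH(2) False restrict_singleton[OF _ 2] by (simp add: right_comb_Cons)
    qed
  qed
qed auto

lemma restrict_left_comb:
  assumes "distinct (Seq u)" and "sorted_wrt (\<lambda>x y. P x \<longrightarrow> P y) (Seq u)"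
    and "\<forall>v\<in>subtrees u. (\<forall>x\<in>leaves v. P x) \<longrightarrow> card (A \<inter> leaves v) \<le> 1"
    and "\<forall>x\<in>A. P x" and "A \<inter> leaves u \<noteq> {}"
  shows "restrict A u = Some (left_comb (filter (\<lambda>x. x \<in> A) (Seq u)))"
proof -
  have "restrict A (mirror u) = Some (right_comb (filter (\<lambda>x. x \<in> A) (Seq (mirror u))))"
    using assms by (intro restrict_right_comb) (auto simp: sorted_wrt_rev subtrees_mirror)
  then have "map_option mirror (restrict A u) = Some (mirror (left_comb (filter (\<lambda>x. x \<in> A) (Seq u))))"
    by (simp add: restrict_mirror left_comb_def rev_filter)
  then show ?thesis
    by (metis map_option_eq_Some mirror_mirror)
qed

section \<open>Unrooted trees\<close>

lemma uverts_Node [simp]: "uverts (Node l r) = positions (Node l r) - {[]}"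
  by (simp add: uverts_def)

lemma uedgeI: "\<lbrakk>p \<noteq> []; p @ [b] \<in> positions (Node l r)\<rbrakk> \<Longrightarrow> {p, p @ [b]} \<in> uedges (Node l r)"
  unfolding uedges_def by auto

lemma uedge_root: "{[False], [True]} \<in> uedges (Node l r)"
  unfolding uedges_def by auto

lemma uedgesE:
  assumes "e \<in> uedges (Node l r)"
  obtains p b where "e = {p, p @ [b]}" "p \<noteq> []" "p @ [b] \<in> positions (Node l r)"
  | "e = {[False], [True]}"
  using assms unfolding uedges_def by auto

lemma uidenticalI:
  assumes "\<forall>p\<in>uverts t1. f p \<in> uverts t2" "\<forall>p\<in>uverts t2. g p \<in> uverts t1"
    "\<forall>p\<in>uverts t1. g (f p) = p" "\<forall>p\<in>uverts t2. f (g p) = p"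
    "\<forall>p\<in>uverts t1. \<forall>q\<in>uverts t1. {p, q} \<in> uedges t1 \<longrightarrow> {f p, f q} \<in> uedges t2"
    "\<forall>p\<in>uverts t2. \<forall>q\<in>uverts t2. {p, q} \<in> uedges t2 \<longrightarrow> {g p, g q} \<in> uedges t1"
    "\<forall>p\<in>uverts t1. ulabel t2 (f p) = ulabel t1 p"
  shows "uidentical t1 t2"
proof -
  have "bij_betw f (uverts t1) (uverts t2)"
    by (rule bij_betw_byWitness[of _ g]) (use assms(1-4) in auto)
  moreover have "{p, q} \<in> uedges t1 \<longleftrightarrow> {f p, f q} \<in> uedges t2"
    if "p \<in> uverts t1" "q \<in> uverts t1" for p q
    using assms(1,3,5,6) that by (metis (no_types, lifting))
  ultimately show ?thesis
    unfolding uidentical_def using assms(7) by blast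
qed

lemma uidenticalE:
  assumes "uidentical t1 t2"
  obtains f where "bij_betw f (uverts t1) (uverts t2)"
    "\<forall>p\<in>uverts t1. \<forall>q\<in>uverts t1. {p, q} \<in> uedges t1 \<longleftrightarrow> {f p, f q} \<in> uedges t2"
    "\<forall>p\<in>uverts t1. ulabel t2 (f p) = ulabel t1 p"
  using assms unfolding uidentical_def by blast

lemma uidentical_refl: "uidentical t t"
  by (rule uidenticalI[of t id t id]) auto

lemma uidentical_sym:
  assumes "uidentical t1 t2" shows "uidentical t2 t1"
proof -
  obtain f where f: "bij_betw f (uverts t1) (uverts t2)"
    "\<forall>p\<in>uverts t1. \<forall>q\<in>uverts t1. {p, q} \<in> uedges t1 \<longleftrightarrow> {f p, f q} \<in> uedges t2"
    "\<forall>p\<in>uverts t1. ulabel t2 (f p) = ulabel t1 p"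
    using assms by (rule uidenticalE)
  let ?g = "inv_into (uverts t1) f"
  have g: "bij_betw ?g (uverts t2) (uverts t1)" "\<forall>p\<in>uverts t2. f (?g p) = p"
    using f(1) by (auto simp: bij_betw_inv_into bij_betw_inv_into_right)
  have "\<forall>p\<in>uverts t2. ?g p \<in> uverts t1" using g(1) by (meson bij_betwE)
  then show ?thesis
    unfolding uidentical_def using f(2,3) g by metis
qed

lemma uidentical_trans:
  assumes "uidentical t1 t2" "uidentical t2 t3" shows "uidentical t1 t3"
proof -
  obtain f where f: "bij_betw f (uverts t1) (uverts t2)"
    "\<forall>p\<in>uverts t1. \<forall>q\<in>uverts t1. {p, q} \<in> uedges t1 \<longleftrightarrow> {f p, f q} \<in> uedges t2"
    "\<forall>p\<in>uverts t1. ulabel t2 (f p) = ulabel t1 p"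
    using assms(1) by (rule uidenticalE)
  obtain h where h: "bij_betw h (uverts t2) (uverts t3)"
    "\<forall>p\<in>uverts t2. \<forall>q\<in>uverts t2. {p, q} \<in> uedges t2 \<longleftrightarrow> {h p, h q} \<in> uedges t3"
    "\<forall>p\<in>uverts t2. ulabel t3 (h p) = ulabel t2 p"
    using assms(2) by (rule uidenticalE)
  have "\<forall>p\<in>uverts t1. f p \<in> uverts t2" using f(1) by (meson bij_betwE)
  then show ?thesis
    unfolding uidentical_def using bij_betw_trans[OF f(1) h(1)] f(2,3) h(2,3) by auto
qed

lemma ucaterpillar_uidentical:
  assumes "uidentical t1 t2" "ucaterpillar t1" shows "ucaterpillar t2"
proof -
  obtain f where f: "bij_betw f (uverts t1) (uverts t2)"
    "\<forall>p\<in>uverts t1. \<forall>q\<in>uverts t1. {p, q} \<in> uedges t1 \<longleftrightarrow> {f p, f q} \<in> uedges t2"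
    "\<forall>p\<in>uverts t1. ulabel t2 (f p) = ulabel t1 p"
    using assms(1) by (rule uidenticalE)
  show ?thesis unfolding ucaterpillar_def
  proof (intro ballI impI)
    fix v assume v: "v \<in> uverts t2" "ulabel t2 v = None"
    obtain u where u: "u \<in> uverts t1" "v = f u" using v(1) f(1) by (metis bij_betw_def imageE)
    then obtain w where w: "w \<in> uverts t1" "{u, w} \<in> uedges t1" "ulabel t1 w \<noteq> None"
      using assms(2) f(3) v(2) unfolding ucaterpillar_def by metis
    then show "\<exists>w\<in>uverts t2. {v, w} \<in> uedges t2 \<and> ulabel t2 w \<noteq> None"
      using f u by (metis bij_betwE)
  qed
qed

text \<open>\<open>rotate_pos\<close> sends a position of \<open>(a b) c\<close> to the position of the same vertex of
  \<open>a (b c)\<close>: the subtrees \<open>a\<close>, \<open>b\<close>, \<open>c\<close> keep their vertices, and the inner node \<open>ab\<close>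
  becomes \<open>bc\<close>.\<close>

fun rotate_pos :: "bool list \<Rightarrow> bool list" where
  "rotate_pos (False # False # r) = False # r"
| "rotate_pos (False # True # r) = True # False # r"
| "rotate_pos [False] = [True]"
| "rotate_pos (True # r) = True # True # r"
| "rotate_pos [] = []"

fun unrotate_pos :: "bool list \<Rightarrow> bool list" where
  "unrotate_pos (False # r) = False # False # r"
| "unrotate_pos [True] = [False]"
| "unrotate_pos (True # False # r) = False # True # r"
| "unrotate_pos (True # True # r) = True # r"
| "unrotate_pos [] = []"

lemma bool_list_cases:
  obtains "p = []" | "p = [False]" | "p = [True]" | r where "p = False # False # r"
  | r where "p = False # True # r" | r where "p = True # False # r" | r where "p = True # True # r"
  by (metis (full_types) list.exhaust)

lemma rotate_pos_append: "p \<noteq> [] \<Longrightarrow> p \<noteq> [False] \<Longrightarrow> rotate_pos (p @ q) = rotate_pos p @ q"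
  by (cases p rule: bool_list_cases) auto

lemma unrotate_pos_append: "p \<noteq> [] \<Longrightarrow> p \<noteq> [True] \<Longrightarrow> unrotate_pos (p @ q) = unrotate_pos p @ q"
  by (cases p rule: bool_list_cases) auto

lemma uverts_rotate:
  "p \<in> uverts (Node (Node a b) c) \<Longrightarrow> rotate_pos p \<in> uverts (Node a (Node b c))"
  by (cases p rule: bool_list_cases) auto

lemma uverts_unrotate:
  "p \<in> uverts (Node a (Node b c)) \<Longrightarrow> unrotate_pos p \<in> uverts (Node (Node a b) c)"
  by (cases p rule: bool_list_cases) auto

lemma uedges_rotate:
  assumes "{p, q} \<in> uedges (Node (Node a b) c)"
  shows "{rotate_pos p, rotate_pos q} \<in> uedges (Node a (Node b c))"
  using assms
proof (cases rule: uedgesE)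
  case (1 p0 \<beta>)
  then have "{rotate_pos p, rotate_pos q} = {rotate_pos p0, rotate_pos (p0 @ [\<beta>])}"
    by (metis image_empty image_insert)
  moreover have "{rotate_pos p0, rotate_pos (p0 @ [\<beta>])} \<in> uedges (Node a (Node b c))"
  proof (cases "p0 = [False]")
    case True
    then show ?thesis
      using uedge_root uedgeI[of "[True]" False a "Node b c"] by (cases \<beta>) (auto simp: insert_commute)
  next
    case False
    have "rotate_pos p0 \<noteq> []" using 1(2) by (cases p0 rule: bool_list_cases) auto
    moreover have "rotate_pos (p0 @ [\<beta>]) = rotate_pos p0 @ [\<beta>]"
      using 1(2) False by (rule rotate_pos_append)
    moreover have "rotate_pos (p0 @ [\<beta>]) \<in> positions (Node a (Node b c))"
      using 1(2,3) uverts_rotate[of "p0 @ [\<beta>]" a b c] by auto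
    ultimately show ?thesis by (metis uedgeI)
  qed
  ultimately show ?thesis by simp
next
  case 2
  have "{rotate_pos p, rotate_pos q} = rotate_pos ` {p, q}" by simp
  also have "\<dots> = {[True], [True] @ [True]}" using 2 by auto
  finally show ?thesis using uedgeI[of "[True]" True a "Node b c"] by simp
qed

lemma uedges_unrotate:
  assumes "{p, q} \<in> uedges (Node a (Node b c))"
  shows "{unrotate_pos p, unrotate_pos q} \<in> uedges (Node (Node a b) c)"
  using assms
proof (cases rule: uedgesE)
  case (1 p0 \<beta>)
  then have "{unrotate_pos p, unrotate_pos q} = {unrotate_pos p0, unrotate_pos (p0 @ [\<beta>])}"
    by (metis image_empty image_insert)
  moreover have "{unrotate_pos p0, unrotate_pos (p0 @ [\<beta>])} \<in> uedges (Node (Node a b) c)"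
  proof (cases "p0 = [True]")
    case True
    then show ?thesis
      using uedge_root uedgeI[of "[False]" True "Node a b" c] by (cases \<beta>) auto
  next
    case False
    have "unrotate_pos p0 \<noteq> []" using 1(2) by (cases p0 rule: bool_list_cases) auto
    moreover have "unrotate_pos (p0 @ [\<beta>]) = unrotate_pos p0 @ [\<beta>]"
      using 1(2) False by (rule unrotate_pos_append)
    moreover have "unrotate_pos (p0 @ [\<beta>]) \<in> positions (Node (Node a b) c)"
      using 1(2,3) uverts_unrotate[of "p0 @ [\<beta>]" a b c] by auto
    ultimately show ?thesis by (metis uedgeI)
  qed
  ultimately show ?thesis by simp
next
  case 2
  have "{unrotate_pos p, unrotate_pos q} = unrotate_pos ` {p, q}" by simp
  also have "\<dots> = {[False], [False] @ [False]}" using 2 by auto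
  finally show ?thesis using uedgeI[of "[False]" False "Node a b" c] by simp
qed

lemma uidentical_rotate: "uidentical (Node (Node a b) c) (Node a (Node b c))"
proof (rule uidenticalI[of _ rotate_pos _ unrotate_pos])
  show "\<forall>p\<in>uverts (Node (Node a b) c). unrotate_pos (rotate_pos p) = p"
    "\<forall>p\<in>uverts (Node a (Node b c)). rotate_pos (unrotate_pos p) = p"
    by (auto elim: bool_list_cases)
  show "\<forall>p\<in>uverts (Node (Node a b) c). ulabel (Node a (Node b c)) (rotate_pos p) = ulabel (Node (Node a b) c) p"
    by (auto simp: ulabel_def elim: bool_list_cases)
qed (use uverts_rotate uverts_unrotate uedges_rotate uedges_unrotate in blast)+

lemma right_comb_snoc: "right_comb (xs @ [x]) = foldr (\<lambda>y t. Node (Leaf y) t) xs (Leaf x)"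
  by (induction xs) (auto simp: right_comb_Cons)

lemma uidentical_Node_left_comb:
  "xs \<noteq> [] \<Longrightarrow> uidentical (Node (left_comb xs) t) (foldr (\<lambda>y t. Node (Leaf y) t) xs t)"
proof (induction xs arbitrary: t rule: rev_induct)
  case (snoc x xs)
  show ?case
  proof (cases "xs = []")
    case True
    then show ?thesis by (simp add: left_comb_def uidentical_refl)
  next
    case False
    have "uidentical (Node (Node (left_comb xs) (Leaf x)) t) (Node (left_comb xs) (Node (Leaf x) t))"
      by (rule uidentical_rotate)
    moreover have "uidentical (Node (left_comb xs) (Node (Leaf x) t))
        (foldr (\<lambda>y t. Node (Leaf y) t) xs (Node (Leaf x) t))"
      using snoc.IH[OF False] .
    ultimately show ?thesis
      using False by (simp add: left_comb_snoc uidentical_trans)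
  qed
qed simp

lemma uidentical_left_comb_right_comb: "xs \<noteq> [] \<Longrightarrow> uidentical (left_comb xs) (right_comb xs)"
proof (induction xs rule: rev_induct)
  case (snoc x xs)
  show ?case
  proof (cases "xs = []")
    case True
    then show ?thesis by (simp add: left_comb_def uidentical_refl)
  next
    case False
    then show ?thesis
      by (simp add: left_comb_snoc right_comb_snoc uidentical_Node_left_comb)
  qed
qed simp

lemma ucaterpillar_if_left_children_leaves:
  assumes "\<forall>p\<in>positions t. \<forall>l r. subtree_at t p = Node l r \<longrightarrow> (\<exists>a. l = Leaf a)"
  shows "ucaterpillar t"
  unfolding ucaterpillar_def
proof (intro ballI impI)
  fix v assume v: "v \<in> uverts t" "ulabel t v = None"
  then obtain l r where t: "t = Node l r" and vp: "v \<in> positions t" "v \<noteq> []"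
    by (cases t) (auto simp: uverts_def ulabel_def)
  obtain l' r' where "subtree_at t v = Node l' r'"
    using v(2) unfolding ulabel_def by (cases "subtree_at t v") auto
  moreover obtain a where "l' = Leaf a" using assms vp(1) calculation by blast
  ultimately have "v @ [False] \<in> positions t" "subtree_at t (v @ [False]) = Leaf a"
    using positions_append_iff[OF vp(1)] subtree_at_append[OF vp(1)] by auto
  then show "\<exists>w\<in>uverts t. {v, w} \<in> uedges t \<and> ulabel t w \<noteq> None"
    using t vp(2) uedgeI[of v False l r] by (intro bexI[of _ "v @ [False]"]) (auto simp: ulabel_def)
qed

lemma ucaterpillar_right_comb: "ucaterpillar (right_comb xs)"
proof (rule ucaterpillar_if_left_children_leaves)
  show "\<forall>p\<in>positions (right_comb xs). \<forall>l r. subtree_at (right_comb xs) p = Node l r \<longrightarrow> (\<exists>a. l = Leaf a)"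
  proof (induction xs rule: right_comb.induct)
    case (3 x y ys)
    show ?case
    proof (intro ballI allI impI)
      fix p l r
      assume "p \<in> positions (right_comb (x # y # ys))" "subtree_at (right_comb (x # y # ys)) p = Node l r"
      then show "\<exists>a. l = Leaf a"
        using "3.IH" by (cases p) (auto split: if_splits)
    qed
  qed auto
qed

lemma ucaterpillar_left_comb: "xs \<noteq> [] \<Longrightarrow> ucaterpillar (left_comb xs)"
  using ucaterpillar_uidentical[OF uidentical_sym ucaterpillar_right_comb]
    uidentical_left_comb_right_comb by blast

section \<open>Sparse samples and the main argument\<close>

lemma index_in_sublist:
  assumes "s = p @ w @ t" "distinct s" "j < length s" "s ! j \<in> set w"
  shows "length p \<le> j" "j < length p + length w"
proof -
  obtain i where i: "i < length w" "w ! i = s ! j" using assms(4) by (metis in_set_conv_nth)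
  have "s ! (length p + i) = s ! j" "length p + i < length s"
    using assms(1) i by (simp_all add: nth_append)
  then have "length p + i = j" using assms(2,3) nth_eq_iff_index_eq by metis
  then show "length p \<le> j" "j < length p + length w" using i(1) by auto
qed

lemma card_nth_image_inter_sublist_le_1:
  assumes s: "distinct s" and w: "sublist w s" "length w \<le> K"
    and J: "J \<subseteq> {..<length s}" "\<forall>i\<in>J. \<forall>j\<in>J. i < j \<longrightarrow> i + K \<le> j"
  shows "card ((!) s ` J \<inter> set w) \<le> 1"
proof -
  obtain p t where pt: "s = p @ w @ t" using w(1) unfolding sublist_def by blast
  have "i = j" if ij: "i \<in> J" "j \<in> J" "s ! i \<in> set w" "s ! j \<in> set w" for i j
  proof -
    have "i < length s" "j < length s" using ij J(1) by auto
    note bounds = index_in_sublist[OF pt s this(1) ij(3)] index_in_sublist[OF pt s this(2) ij(4)]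
    show "i = j"
    proof (rule linorder_cases[of i j])
      assume "i < j"
      then show ?thesis using J(2) ij(1,2) bounds w(2) by fastforce
    next
      assume "j < i"
      then show ?thesis using J(2) ij(1,2) bounds w(2) by fastforce
    qed
  qed
  then have "\<forall>x\<in>(!) s ` J \<inter> set w. \<forall>y\<in>(!) s ` J \<inter> set w. x = y" by blast
  then show ?thesis by (simp add: card_le_Suc0_iff_eq)
qed

lemma sparse_sample:
  assumes s: "distinct s" and K: "0 < K" and b: "b \<le> length s"
  obtains A where "A \<subseteq> set (take b s) - set (take a s)" "b \<le> a + card A * K"
    "\<And>w. sublist w s \<Longrightarrow> length w \<le> K \<Longrightarrow> card (A \<inter> set w) \<le> 1"
proof -
  have "\<exists>q. b \<le> a + q * K" using K by (intro exI[of _ b]) (simp add: trans_le_add2)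
  then obtain q where q: "b \<le> a + q * K" "\<forall>i<q. a + i * K < b"
    by (auto simp: exists_least_iff[of "\<lambda>q. b \<le> a + q * K"] not_le)
  define J where "J = (\<lambda>i. a + i * K) ` {..<q}"
  have J_bounds: "a \<le> j" "j < b" if "j \<in> J" for j
    using that q(2) unfolding J_def by auto
  have "i * K + K \<le> j * K" if "i < j" for i j
    using mult_le_mono1[of "Suc i" j K] that by simp
  then have J_sparse: "\<forall>i\<in>J. \<forall>j\<in>J. i < j \<longrightarrow> i + K \<le> j"
    unfolding J_def by auto
  have "inj_on (\<lambda>i. a + i * K) {..<q}" using K by (auto simp: inj_on_def)
  moreover have "inj_on ((!) s) J"
    using J_bounds b s by (intro inj_onI) (metis nth_eq_iff_index_eq order_less_le_trans)
  ultimately have card: "card ((!) s ` J) = q"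
    unfolding J_def by (simp add: card_image)
  have "(!) s ` J \<subseteq> set (take b s) - set (take a s)"
  proof
    fix x assume "x \<in> (!) s ` J"
    then obtain j where j: "j \<in> J" "x = s ! j" by blast
    have "a \<le> j" "j < b" "b \<le> length s" using J_bounds[OF j(1)] b by auto
    then have "x = take b s ! j" "j < length (take b s)"
      and "x = drop a s ! (j - a)" "j - a < length (drop a s)"
      using j(2) by simp_all
    then have "x \<in> set (take b s)" "x \<in> set (drop a s)" by (metis nth_mem)+
    moreover have "set (take a s) \<inter> set (drop a s) = {}"
      using s by (rule set_take_disj_set_drop_if_distinct) simp
    ultimately show "x \<in> set (take b s) - set (take a s)" by blast
  qed
  moreover have "J \<subseteq> {..<length s}" using J_bounds b by fastforce
  ultimately show ?thesis
    using that card q(1) card_nth_image_inter_sublist_le_1[OF s _ _ _ J_sparse] by metis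
qed

lemma sorted_wrt_append_blocks:
  assumes "set xs \<inter> set ys = {}"
  shows "sorted_wrt (\<lambda>x y. y \<in> set xs \<longrightarrow> x \<in> set xs) (xs @ ys)"
    and "sorted_wrt (\<lambda>x y. x \<in> set ys \<longrightarrow> y \<in> set ys) (xs @ ys)"
proof -
  have all: "sorted_wrt Q zs" if "\<And>x y. x \<in> set zs \<Longrightarrow> y \<in> set zs \<Longrightarrow> Q x y" for Q zs
    by (rule sorted_wrt_mono_rel[OF _ sorted_wrt_true]) (simp add: that)
  show "sorted_wrt (\<lambda>x y. y \<in> set xs \<longrightarrow> x \<in> set xs) (xs @ ys)"
    and "sorted_wrt (\<lambda>x y. x \<in> set ys \<longrightarrow> y \<in> set ys) (xs @ ys)"
    unfolding sorted_wrt_append using assms by (auto intro!: all)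
qed

lemma distinct_Seq_subtrees: "distinct (Seq t) \<Longrightarrow> v \<in> subtrees t \<Longrightarrow> distinct (Seq v)"
  using sublist_Seq_subtrees by (fastforce simp: sublist_def)

lemma length_Seq_clade_in_child_le:
  assumes t1: "rooted_Ztree Z t1" and t2: "rooted_Ztree Z (Node l r)"
    and escape: "\<forall>x Y. escape_pair Z t1 (Node l r) x Y \<longrightarrow> card Y \<le> K"
    and v: "v \<in> subtrees t1" "leaves v \<subseteq> leaves l \<or> leaves v \<subseteq> leaves r"
  shows "length (Seq v) \<le> K"
proof -
  obtain p where "p \<in> positions t1" "v = subtree_at t1 p"
    using v(1) subtrees_eq_subtree_at_positions by blast
  then have "card (leaves v) \<le> K"
    using ex_escape_pair_clade_in_child[OF t1 t2] v(2) escape by blast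
  moreover have "distinct (Seq v)"
    using t1 v(1) distinct_Seq_subtrees unfolding rooted_Ztree_def by blast
  ultimately show ?thesis by (simp add: distinct_card)
qed

lemma restr_Node_disjoint:
  "A \<inter> leaves l = {} \<Longrightarrow> restrict A r = Some t \<Longrightarrow> restr (Node l r) A = t"
  "A \<inter> leaves r = {} \<Longrightarrow> restrict A l = Some t \<Longrightarrow> restr (Node l r) A = t"
  by (simp_all add: restr_def flip: restrict_eq_None_iff)

lemma restr_sample_combs:
  assumes T1: "rooted_Ztree Z (Node l1 r1)" and T2: "rooted_Ztree Z (Node l2 r2)"
    and same: "Seq (Node l1 r1) = Seq (Node l2 r2)"
    and escape: "\<forall>x Y. escape_pair Z (Node l1 r1) (Node l2 r2) x Y \<longrightarrow> card Y \<le> K"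
    and A: "A \<subseteq> leaves l2 - leaves l1" "A \<noteq> {}"
    and sparse: "\<And>w. sublist w (Seq (Node l1 r1)) \<Longrightarrow> length w \<le> K \<Longrightarrow> card (A \<inter> set w) \<le> 1"
  shows "restr (Node l1 r1) A = right_comb (filter (\<lambda>x. x \<in> A) (Seq (Node l1 r1)))"
    and "restr (Node l2 r2) A = left_comb (filter (\<lambda>x. x \<in> A) (Seq (Node l1 r1)))"
proof -
  have s: "Seq l1 @ Seq r1 = Seq l2 @ Seq r2" using same by simp
  have dist: "distinct (Seq l1 @ Seq r1)" "distinct (Seq l2 @ Seq r2)"
    using T1 s unfolding rooted_Ztree_def by simp_all
  have split: "leaves l1 \<union> leaves r1 = leaves l2 \<union> leaves r2"
    "leaves l1 \<inter> leaves r1 = {}" "leaves l2 \<inter> leaves r2 = {}"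
    using s dist by (metis set_append) (use dist in simp_all)
  have escape': "\<forall>x Y. escape_pair Z (Node l2 r2) (Node l1 r1) x Y \<longrightarrow> card Y \<le> K"
    using escape by (simp add: escape_pair_commute)
  have sparse_clade: "card (A \<inter> leaves v) \<le> 1"
    if "rooted_Ztree Z (Node l r)" "Seq (Node l r) = Seq (Node l1 r1)"
      "\<forall>x Y. escape_pair Z (Node l r) (Node l' r') x Y \<longrightarrow> card Y \<le> K"
      "rooted_Ztree Z (Node l' r')" "v \<in> subtrees (Node l r)" "leaves v \<subseteq> leaves l' \<or> leaves v \<subseteq> leaves r'"
    for l r l' r' v
    using sparse[OF _ length_Seq_clade_in_child_le[OF that(1,4,3,5,6)]] sublist_Seq_subtrees[OF that(5)]
      that(2) by simp
  have "restrict A r1 = Some (right_comb (filter (\<lambda>x. x \<in> A) (Seq r1)))"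
  proof (rule restrict_right_comb[where P = "\<lambda>x. x \<in> leaves l2"])
    have "sorted_wrt (\<lambda>x y. y \<in> leaves l2 \<longrightarrow> x \<in> leaves l2) (Seq l1 @ Seq r1)"
      unfolding s using split(3) by (rule sorted_wrt_append_blocks(1))
    then show "sorted_wrt (\<lambda>x y. y \<in> leaves l2 \<longrightarrow> x \<in> leaves l2) (Seq r1)"
      by (simp add: sorted_wrt_append)
    show "\<forall>v\<in>subtrees r1. (\<forall>x\<in>leaves v. x \<in> leaves l2) \<longrightarrow> card (A \<inter> leaves v) \<le> 1"
      using sparse_clade[OF T1 refl escape T2] by (simp add: subset_iff)
    show "distinct (Seq r1)" using dist(1) by simp
    show "\<forall>x\<in>A. x \<in> leaves l2" "A \<inter> leaves r1 \<noteq> {}" using A split(1) by blast+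
  qed
  moreover have "A \<inter> leaves l1 = {}" "filter (\<lambda>x. x \<in> A) (Seq l1) = []"
    using A(1) by (auto simp: filter_empty_conv)
  ultimately show "restr (Node l1 r1) A = right_comb (filter (\<lambda>x. x \<in> A) (Seq (Node l1 r1)))"
    by (simp add: restr_Node_disjoint(1))
  have "restrict A l2 = Some (left_comb (filter (\<lambda>x. x \<in> A) (Seq l2)))"
  proof (rule restrict_left_comb[where P = "\<lambda>x. x \<in> leaves r1"])
    have "sorted_wrt (\<lambda>x y. x \<in> leaves r1 \<longrightarrow> y \<in> leaves r1) (Seq l2 @ Seq r2)"
      unfolding s[symmetric] using split(2) by (rule sorted_wrt_append_blocks(2))
    then show "sorted_wrt (\<lambda>x y. x \<in> leaves r1 \<longrightarrow> y \<in> leaves r1) (Seq l2)"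
      by (simp add: sorted_wrt_append)
    show "\<forall>v\<in>subtrees l2. (\<forall>x\<in>leaves v. x \<in> leaves r1) \<longrightarrow> card (A \<inter> leaves v) \<le> 1"
      using sparse_clade[OF T2 same[symmetric] escape' T1] by (simp add: subset_iff)
    show "distinct (Seq l2)" using dist(2) by simp
    show "\<forall>x\<in>A. x \<in> leaves r1" "A \<inter> leaves l2 \<noteq> {}" using A split(1) by blast+
  qed
  moreover have "A \<inter> leaves r2 = {}" "filter (\<lambda>x. x \<in> A) (Seq r2) = []"
    using A(1) split(3) by (auto simp: filter_empty_conv)
  ultimately show "restr (Node l2 r2) A = left_comb (filter (\<lambda>x. x \<in> A) (Seq (Node l1 r1)))"
    by (simp add: s restr_Node_disjoint(2))
qed

lemma ex_comb_restrictions: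
  assumes T1: "rooted_Ztree Z (Node l1 r1)" and T2: "rooted_Ztree Z (Node l2 r2)"
    and same: "Seq (Node l1 r1) = Seq (Node l2 r2)"
    and escape: "\<forall>x Y. escape_pair Z (Node l1 r1) (Node l2 r2) x Y \<longrightarrow> card Y \<le> K"
    and l1_l2: "leaves l1 \<subseteq> leaves l2"
    and big: "2 * K < card Z"
  shows "\<exists>A xs. A \<subseteq> Z \<and> card Z \<le> (card A + 2) * K \<and> xs \<noteq> []
            \<and> restr (Node l1 r1) A = right_comb xs \<and> restr (Node l2 r2) A = left_comb xs"
proof -
  define s where "s = Seq (Node l1 r1)"
  have s1: "s = Seq l1 @ Seq r1" and s2: "s = Seq l2 @ Seq r2"
    using same by (simp_all add: s_def)
  have dist: "distinct s" and Z: "set s = Z" using T1 unfolding rooted_Ztree_def s_def by auto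
  have "leaves l1 \<union> leaves r1 = leaves l2 \<union> leaves r2" "leaves l2 \<inter> leaves r2 = {}"
    using dist s1 s2 by (metis set_append, metis distinct_append)
  then have "leaves r2 \<subseteq> leaves r1" using l1_l2 by blast
  then have "length (Seq l1) \<le> K" "length (Seq r2) \<le> K"
    using length_Seq_clade_in_child_le[OF T1 T2 escape, of l1] l1_l2
      length_Seq_clade_in_child_le[OF T2 T1 _, of K r2] escape by (auto simp: escape_pair_commute)
  moreover have "0 < K" using calculation(1) Seq_neq_Nil[of l1] by (cases "Seq l1") auto
  moreover have "length (Seq l2) \<le> length s" using s2 by simp
  ultimately obtain A where A: "A \<subseteq> leaves l2 - leaves l1"
      "length (Seq l2) \<le> length (Seq l1) + card A * K"
    and sparse: "\<And>w. sublist w s \<Longrightarrow> length w \<le> K \<Longrightarrow> card (A \<inter> set w) \<le> 1"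
    using sparse_sample[OF dist, of K "length (Seq l2)" "length (Seq l1)"]
    by (metis append_eq_conv_conj s1 s2)
  have "card Z = length (Seq l2) + length (Seq r2)"
    using Z dist s2 distinct_card by fastforce
  with A(2) \<open>length (Seq l1) \<le> K\<close> \<open>length (Seq r2) \<le> K\<close>
  have card_Z: "card Z \<le> (card A + 2) * K" by (simp add: algebra_simps)
  with big have "A \<noteq> {}" by auto
  moreover from this have "filter (\<lambda>x. x \<in> A) s \<noteq> []"
    using A(1) s2 by (auto simp: filter_empty_conv)
  moreover have "A \<subseteq> Z" using A(1) Z s2 by auto
  ultimately show ?thesis
    using card_Z restr_sample_combs[OF T1 T2 same escape A(1)] sparse unfolding s_def by blast
qed

lemma ex_comb_restrictions_sym:
  assumes T1: "rooted_Ztree Z (Node l1 r1)" and T2: "rooted_Ztree Z (Node l2 r2)"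
    and same: "Seq (Node l1 r1) = Seq (Node l2 r2)"
    and escape: "\<forall>x Y. escape_pair Z (Node l1 r1) (Node l2 r2) x Y \<longrightarrow> card Y \<le> K"
    and big: "2 * K < card Z"
  shows "\<exists>A xs. A \<subseteq> Z \<and> card Z \<le> (card A + 2) * K \<and> xs \<noteq> []
            \<and> {restr (Node l1 r1) A, restr (Node l2 r2) A} = {right_comb xs, left_comb xs}"
proof -
  have "Seq l1 @ Seq r1 = Seq l2 @ Seq r2" using same by simp
  then have "prefix (Seq l1) (Seq l2) \<or> prefix (Seq l2) (Seq l1)"
    by (metis prefixI prefix_same_cases)
  then consider "leaves l1 \<subseteq> leaves l2" | "leaves l2 \<subseteq> leaves l1"
    by (auto dest: set_mono_prefix)
  then show ?thesis
  proof cases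
    case 1
    from ex_comb_restrictions[OF T1 T2 same escape 1 big] obtain A xs
      where "A \<subseteq> Z" "card Z \<le> (card A + 2) * K" "xs \<noteq> []"
        "restr (Node l1 r1) A = right_comb xs" "restr (Node l2 r2) A = left_comb xs"
      by blast
    then show ?thesis by (intro exI[of _ A] exI[of _ xs]) simp
  next
    case 2
    have "\<forall>x Y. escape_pair Z (Node l2 r2) (Node l1 r1) x Y \<longrightarrow> card Y \<le> K"
      using escape by (simp add: escape_pair_commute)
    from ex_comb_restrictions[OF T2 T1 same[symmetric] this 2 big] obtain A xs
      where "A \<subseteq> Z" "card Z \<le> (card A + 2) * K" "xs \<noteq> []"
        "restr (Node l2 r2) A = right_comb xs" "restr (Node l1 r1) A = left_comb xs"
      by blast
    then show ?thesis by (intro exI[of _ A] exI[of _ xs]) (simp add: insert_commute)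
  qed
qed

lemma restr_first_two:
  assumes "distinct (Seq t)" "Seq t = x # y # zs"
  shows "restr t {x, y} = Node (Leaf x) (Leaf y)"
proof -
  obtain t' where t': "restrict {x, y} t = Some t'"
    using assms(2) restrict_eq_None_iff[of "{x, y}" t] by fastforce
  have "filter (\<lambda>z. z \<in> {x, y}) (Seq t) = [x, y]"
    using assms by (auto simp: filter_empty_conv)
  then show ?thesis
    using Seq_restrict[OF t'] Seq_eq_doubleton t' by (simp add: restr_def)
qed

lemma ex_cherry_restrictions:
  assumes "rooted_Ztree Z t1" "rooted_Ztree Z t2" "Seq t1 = Seq t2" "card Z \<ge> 2"
  shows "\<exists>A xs. A \<subseteq> Z \<and> card A = 2 \<and> xs \<noteq> [] \<and> {restr t1 A, restr t2 A} = {right_comb xs, left_comb xs}"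
proof -
  have "distinct (Seq t1)" "set (Seq t1) = Z" using assms(1) unfolding rooted_Ztree_def by auto
  moreover then obtain x y zs where xyzs: "Seq t1 = x # y # zs"
    using assms(4) distinct_card by (metis One_nat_def Suc_1 Suc_le_length_iff)
  ultimately show ?thesis
    using assms(3) restr_first_two[of t1 x y zs] restr_first_two[of t2 x y zs]
    by (intro exI[of _ "{x, y}"] exI[of _ "[x, y]"]) (auto simp: left_comb_def)
qed

lemma comb_restrictions_uidentical_ucaterpillar:
  assumes "xs \<noteq> []" "{t1, t2} = {right_comb xs, left_comb xs}"
  shows "uidentical t1 t2 \<and> ucaterpillar t1 \<and> ucaterpillar t2"
  using assms uidentical_left_comb_right_comb[OF assms(1)] uidentical_sym uidentical_refl
    ucaterpillar_right_comb ucaterpillar_left_comb[OF assms(1)]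
  by (auto simp: doubleton_eq_iff)

lemma ex_greatest_nat_less:
  fixes c :: real
  assumes "0 < c"
  shows "\<exists>K::nat. real K < c \<and> (\<forall>m::nat. real m < c \<longrightarrow> m \<le> K)"
proof (intro exI conjI allI impI)
  show "real (nat \<lceil>c\<rceil> - 1) < c" using assms by linarith
  show "m \<le> nat \<lceil>c\<rceil> - 1" if "real m < c" for m
    using that by linarith
qed

lemma ex_comb_restrictions_log:
  assumes T1: "rooted_Ztree Z T1" and T2: "rooted_Ztree Z T2" and same: "Seq T1 = Seq T2"
    and Z: "card Z \<ge> 2" and L: "1 \<le> L"
    and escape: "\<forall>x Y. escape_pair Z T1 T2 x Y \<longrightarrow> real (card Y) < real (card Z) / (2 * L)"
  shows "\<exists>A xs. A \<subseteq> Z \<and> L \<le> card A \<and> xs \<noteq> [] \<and> {restr T1 A, restr T2 A} = {right_comb xs, left_comb xs}"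
proof (cases "L < 2")
  case True
  obtain A xs where "A \<subseteq> Z" "card A = 2" "xs \<noteq> []"
    "{restr T1 A, restr T2 A} = {right_comb xs, left_comb xs}"
    using ex_cherry_restrictions[OF T1 T2 same Z] by blast
  then show ?thesis using True by (intro exI[of _ A] exI[of _ xs]) simp
next
  case False
  obtain l1 r1 l2 r2 where T: "T1 = Node l1 r1" "T2 = Node l2 r2"
    using T1 T2 unfolding rooted_Ztree_def by blast
  obtain K where K: "real K < real (card Z) / (2 * L)"
    and below: "\<And>m. real m < real (card Z) / (2 * L) \<Longrightarrow> m \<le> K"
    using ex_greatest_nat_less[of "real (card Z) / (2 * L)"] L Z by auto
  have KZ: "2 * L * K < card Z" using K L by (simp add: field_simps)
  moreover have "2 * real K \<le> 2 * L * real K" using L by (intro mult_right_mono) auto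
  ultimately have "2 * K < card Z" by linarith
  then obtain A xs where A: "A \<subseteq> Z" "card Z \<le> (card A + 2) * K" "xs \<noteq> []"
    "{restr T1 A, restr T2 A} = {right_comb xs, left_comb xs}"
    using ex_comb_restrictions_sym[of Z l1 r1 l2 r2 K] T1 T2 same escape below T by auto
  then have "2 * L * K < (real (card A) + 2) * K"
    using KZ by (metis of_nat_add of_nat_le_iff of_nat_mult of_nat_numeral order_less_le_trans)
  then have "2 * L < real (card A) + 2" by (rule mult_right_less_imp_less) simp
  then show ?thesis using A False by (intro exI[of _ A] exI[of _ xs]) auto
qed

theorem corollary1:
  fixes n :: nat and C :: real and Z :: "'a set" and T1 T2 :: "'a btree"
  assumes "n \<ge> 2" and "C \<ge> 4" and "finite Z" and "card Z \<ge> 2"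
    and "rooted_Ztree Z T1" and "rooted_Ztree Z T2"
    and "Seq T1 = Seq T2"
  shows "(\<exists>x Y. x \<in> Z \<and> Y \<noteq> {} \<and> Y \<subset> Z
            \<and> sdesc T1 (lca T1 Y) (lca T1 (Y \<union> {x}))
            \<and> sdesc T2 (lca T2 Y) (lca T2 (Y \<union> {x}))
            \<and> real (card Y) \<ge> real (card Z) / C)
       \<or> (\<exists>x Y. good_pair n Z T1 T2 x Y)
       \<or> (\<exists>A. A \<subseteq> Z \<and> real (card A) \<ge> log 2 (real n)
            \<and> uidentical (restr T1 A) (restr T2 A)
            \<and> ucaterpillar (restr T1 A) \<and> ucaterpillar (restr T2 A))"
proof (cases "\<exists>x Y. good_pair n Z T1 T2 x Y")
  case False
  have L: "1 \<le> log 2 (real n)" using assms(1) by simp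
  have "\<forall>x Y. escape_pair Z T1 T2 x Y \<longrightarrow> real (card Y) < real (card Z) / (2 * log 2 (real n))"
    using False by (auto simp: good_pair_iff not_le)
  from ex_comb_restrictions_log[OF assms(5-7,4) L this] obtain A xs
    where A: "A \<subseteq> Z" "log 2 (real n) \<le> card A" "xs \<noteq> []"
      "{restr T1 A, restr T2 A} = {right_comb xs, left_comb xs}"
    by blast
  show ?thesis
    using A(1,2) comb_restrictions_uidentical_ucaterpillar[OF A(3,4)]
    by (intro disjI2 exI[of _ A]) simp
qed simp

end
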